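(* Suppose the embedding errors are bounded as $\sup_{s,g\in\mathcal{S}}\bigl|d^*(s,g)-\|\phi(s)-\phi(g)\|\bigr|\le\epsilon_e$, the directional movement errors are bounded as $\sup_{s,g\in\mathcal{S}}\|z'^*(s,g)-\hat z'(s,g)\|\le\epsilon_d$, and $4\epsilon_e+\epsilon_d<1$. Then $\hat\pi$ is an optimal goal-reaching policy, i.e. for every $s,g\in\mathcal{S}$ with $s\neq g$, $d^*(p(s,\hat\pi(s,g)),g)=d^*(s,g)-1$.
   Context: Consider a deterministic Markov decision process with state space $\mathcal{S}$, action space $\mathcal{A}$ and deterministic transition function $p:\mathcal{S}\times\mathcal{A}\to\mathcal{S}$. Let $d^*:\mathcal{S}\times\mathcal{S}\to\mathbb{R}$ be the optimal temporal distance: $d^*(s,g)$ is the minimum number of time steps needed to reach $g$ from $s$, so it is a nonnegative integer and $d^*(s,s)=0$. Let $\phi:\mathcal{S}\to\mathcal{Z}$ be a map into a real Hilbert space with inner product $\langle\cdot,\cdot\rangle$ and induced norm $\|\cdot\|$. Let $N(s):=\{p(s,a):a\in\mathcal{A}\}$. For a state $s$ and a goal $g$ define $$z'^*(s,g):=\phi(s)+\frac{\phi(g)-\phi(s)}{\|\phi(g)-\phi(s)\|},$$ $$\hat\pi(s,g):=\arg\max_{a\in\mathcal{A}}\Bigl\langle\phi(s')-\phi(s),\frac{\phi(g)-\phi(s)}{\|\phi(g)-\phi(s)\|}\Bigr\rangle\ \text{ subject to } s'=p(s,a),\ \|\phi(s)-\phi(s')\|\le1,$$ $$\hat z'(s,g):=\phi\bigl(p(s,\hat\pi(s,g))\bigr).$$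 A goal-conditioned policy is optimal if, at every state-goal pair $(s,g)$ with $s\neq g$, the action it chooses decreases the temporal distance to $g$ by exactly one. *)

theory Defs
  imports "HOL-Analysis.Analysis"
begin

definition run :: "('s \<Rightarrow> 'a \<Rightarrow> 's) \<Rightarrow> 's \<Rightarrow> 'a list \<Rightarrow> 's" where
  "run p s as = foldl p s as"

definition dstar :: "('s \<Rightarrow> 'a \<Rightarrow> 's) \<Rightarrow> 's \<Rightarrow> 's \<Rightarrow> nat" where
  "dstar p s g = (LEAST n. \<exists>as. length as = n \<and> run p s as = g)"

definition dirn :: "('s \<Rightarrow> 'z::real_normed_vector) \<Rightarrow> 's \<Rightarrow> 's \<Rightarrow> 'z" where
  "dirn \<phi> s g = (\<phi> g - \<phi> s) /\<^sub>R norm (\<phi> g - \<phi> s)"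

definition zstar :: "('s \<Rightarrow> 'z::real_normed_vector) \<Rightarrow> 's \<Rightarrow> 's \<Rightarrow> 'z" where
  "zstar \<phi> s g = \<phi> s + dirn \<phi> s g"

definition feasible :: "('s \<Rightarrow> 'a \<Rightarrow> 's) \<Rightarrow> ('s \<Rightarrow> 'z::real_normed_vector) \<Rightarrow> 's \<Rightarrow> 'a \<Rightarrow> bool" where
  "feasible p \<phi> s a \<longleftrightarrow> norm (\<phi> s - \<phi> (p s a)) \<le> 1"

definition is_argmax_action ::
  "('s \<Rightarrow> 'a \<Rightarrow> 's) \<Rightarrow> ('s \<Rightarrow> 'z::real_inner) \<Rightarrow> 's \<Rightarrow> 's \<Rightarrow> 'a \<Rightarrow> bool" where
  "is_argmax_action p \<phi> s g a \<longleftrightarrow>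
     feasible p \<phi> s a \<and>
     (\<forall>b. feasible p \<phi> s b \<longrightarrow>
        inner (\<phi> (p s b) - \<phi> s) (dirn \<phi> s g) \<le> inner (\<phi> (p s a) - \<phi> s) (dirn \<phi> s g))"

definition zhat :: "('s \<Rightarrow> 'a \<Rightarrow> 's) \<Rightarrow> ('s \<Rightarrow> 'z) \<Rightarrow> ('s \<Rightarrow> 's \<Rightarrow> 'a) \<Rightarrow> 's \<Rightarrow> 's \<Rightarrow> 'z" where
  "zhat p \<phi> \<pi> s g = \<phi> (p s (\<pi> s g))"

end

theory Submission
  imports Defs
begin

text \<open>Let \<open>D = d*(s,g) \<ge> 1\<close> and \<open>L = \<parallel>\<phi> g - \<phi> s\<parallel>\<close>. The point \<open>z'*(s,g)\<close> lies on the line through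
  \<open>\<phi> s\<close> and \<open>\<phi> g\<close> at distance \<open>\<bar>1 - L\<bar> \<le> D - 1 + \<epsilon>e\<close> from it, so the successor \<open>s'\<close> chosen by
  the policy satisfies \<open>\<parallel>\<phi> s' - \<phi> g\<parallel> \<le> D - 1 + \<epsilon>e + \<epsilon>d\<close>, and hence
  \<open>d*(s',g) \<le> D - 1 + 2\<epsilon>e + \<epsilon>d < D\<close>. Since one step changes the temporal distance by at most
  one and distances are integers, \<open>d*(s',g) = D - 1\<close>.\<close>

lemma dstar_witness:
  assumes "\<exists>as. run p s as = g"
  shows "\<exists>as. length as = dstar p s g \<and> run p s as = g"
proof -
  from assms obtain bs where "run p s bs = g" by blast
  then have "\<exists>as. length as = length bs \<and> run p s as = g"
    by blast
  then show ?thesis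
    unfolding dstar_def by (rule LeastI[where P = "\<lambda>n. \<exists>as. length as = n \<and> run p s as = g"])
qed

lemma dstar_le_length: "run p s as = g \<Longrightarrow> dstar p s g \<le> length as"
  unfolding dstar_def by (rule Least_le) blast

lemma dstar_pos:
  assumes "\<exists>as. run p s as = g" and "s \<noteq> g"
  shows "dstar p s g > 0"
proof -
  obtain as where "length as = dstar p s g" and "run p s as = g"
    using dstar_witness[OF assms(1)] by blast
  with assms(2) show ?thesis
    by (cases as) (auto simp: run_def)
qed

lemma dstar_le_Suc_dstar_step:
  assumes "\<exists>as. run p (p s a) as = g"
  shows "dstar p s g \<le> Suc (dstar p (p s a) g)"
proof -
  obtain as where "length as = dstar p (p s a) g" and "run p (p s a) as = g"
    using dstar_witness[OF assms] by blast
  then have "run p s (a # as) = g" and "length (a # as) = Suc (dstar p (p s a) g)"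
    by (simp_all add: run_def)
  then show ?thesis
    by (metis dstar_le_length)
qed

lemma dstar_step_eq_pred_if_less:
  assumes "\<exists>as. run p (p s a) as = g"
    and "dstar p (p s a) g < dstar p s g"
  shows "dstar p (p s a) g = dstar p s g - 1"
  using dstar_le_Suc_dstar_step[OF assms(1)] assms(2) by arith

lemma norm_zstar_minus_goal:
  fixes \<phi> :: "'s \<Rightarrow> 'z::real_normed_vector"
  shows "norm (zstar \<phi> s g - \<phi> g) \<le> \<bar>1 - norm (\<phi> g - \<phi> s)\<bar>"
proof (cases "\<phi> g = \<phi> s")
  case False
  define L where "L = norm (\<phi> g - \<phi> s)"
  have "L > 0"
    using False by (simp add: L_def)
  have "zstar \<phi> s g - \<phi> g = (1 / L - 1) *\<^sub>R (\<phi> g - \<phi> s)"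
    unfolding zstar_def dirn_def L_def by (simp add: algebra_simps divide_inverse_commute)
  then have "norm (zstar \<phi> s g - \<phi> g) = \<bar>1 / L - 1\<bar> * L"
    by (simp add: L_def)
  also have "\<dots> = \<bar>1 - L\<bar>"
    using \<open>L > 0\<close> by (simp add: abs_mult_pos left_diff_distrib abs_minus_commute)
  finally show ?thesis
    by (simp add: L_def)
qed (simp add: zstar_def dirn_def)

lemma dstar_step_less_if_near_zstar:
  fixes \<phi> :: "'s \<Rightarrow> 'z::real_normed_vector"
  assumes reach: "\<exists>as. run p s as = g"
    and emb: "\<And>s g. \<bar>real (dstar p s g) - norm (\<phi> s - \<phi> g)\<bar> \<le> \<epsilon>e"
    and near: "norm (zstar \<phi> s g - \<phi> (p s a)) \<le> \<epsilon>d"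
    and small: "2 * \<epsilon>e + \<epsilon>d < 1"
    and "s \<noteq> g"
  shows "dstar p (p s a) g < dstar p s g"
proof -
  define s' where "s' = p s a"
  define D where "D = dstar p s g"
  have "D \<ge> 1"
    using dstar_pos[OF reach \<open>s \<noteq> g\<close>] by (simp add: D_def)
  have "\<bar>real D - norm (\<phi> g - \<phi> s)\<bar> \<le> \<epsilon>e"
    using emb[of s g] by (simp add: D_def norm_minus_commute)
  then have "norm (zstar \<phi> s g - \<phi> g) \<le> real D - 1 + \<epsilon>e"
    using norm_zstar_minus_goal[of \<phi> s g] \<open>D \<ge> 1\<close> by linarith
  moreover have "norm (\<phi> s' - \<phi> g) \<le> norm (\<phi> s' - zstar \<phi> s g) + norm (zstar \<phi> s g - \<phi> g)"
    using norm_triangle_ineq[of "\<phi> s' - zstar \<phi> s g" "zstar \<phi> s g - \<phi> g"] by simp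
  moreover have "norm (\<phi> s' - zstar \<phi> s g) \<le> \<epsilon>d"
    using near by (simp add: s'_def norm_minus_commute)
  moreover have "real (dstar p s' g) \<le> norm (\<phi> s' - \<phi> g) + \<epsilon>e"
    using emb[of s' g] by linarith
  ultimately have "real (dstar p s' g) < real D"
    using small by linarith
  then show ?thesis
    by (simp add: s'_def D_def)
qed

theorem corollaryC3:
  fixes p :: "'s \<Rightarrow> 'a \<Rightarrow> 's"
    and \<phi> :: "'s \<Rightarrow> 'z::{real_inner, complete_space}"
    and \<pi> :: "'s \<Rightarrow> 's \<Rightarrow> 'a"
    and \<epsilon>e \<epsilon>d :: real
  assumes reach: "\<And>s g. \<exists>as. run p s as = g"
    and pihat: "\<And>s g. s \<noteq> g \<Longrightarrow> is_argmax_action p \<phi> s g (\<pi> s g)"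
    and emb: "\<And>s g. \<bar>real (dstar p s g) - norm (\<phi> s - \<phi> g)\<bar> \<le> \<epsilon>e"
    and dir: "\<And>s g. s \<noteq> g \<Longrightarrow> norm (zstar \<phi> s g - zhat p \<phi> \<pi> s g) \<le> \<epsilon>d"
    and small: "4 * \<epsilon>e + \<epsilon>d < 1"
  shows "\<forall>s g. s \<noteq> g \<longrightarrow> dstar p (p s (\<pi> s g)) g = dstar p s g - 1"
proof (intro allI impI)
  fix s g :: 's assume "s \<noteq> g"
  have "\<epsilon>e \<ge> 0"
    using emb[of s s] by simp
  have "norm (zstar \<phi> s g - \<phi> (p s (\<pi> s g))) \<le> \<epsilon>d"
    using dir[OF \<open>s \<noteq> g\<close>] by (simp add: zhat_def)
  then have "dstar p (p s (\<pi> s g)) g < dstar p s g"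
    using dstar_step_less_if_near_zstar[OF reach emb _ _ \<open>s \<noteq> g\<close>] small \<open>\<epsilon>e \<ge> 0\<close> by simp
  then show "dstar p (p s (\<pi> s g)) g = dstar p s g - 1"
    by (rule dstar_step_eq_pred_if_less[OF reach])
qed

end
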